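(* For every graph $G$ with $n$ vertices and $m$ edges, \[ 2\sum_{uv\in E(G)} d(u)d(v)\geq 4m^2+\sum_{u\in V(G)}\bigl(d^3(u)-n\,d^2(u)\bigr). \]
   Context: All graphs are finite, simple and undirected. $d(u)$ is the degree of vertex $u$; the sum over $uv\in E(G)$ runs over each edge once. *)

theory Defs
  imports Main
begin

definition simple_graph :: "'a set \<Rightarrow> 'a set set \<Rightarrow> bool" where
  "simple_graph V E \<longleftrightarrow> finite V \<and> (\<forall>e\<in>E. e \<subseteq> V \<and> card e = 2)"

definition degree :: "'a set set \<Rightarrow> 'a \<Rightarrow> nat" where
  "degree E u = card {e\<in>E. u \<in> e}"

end

theory Submission
  imports Defs
begin

text \<open>For an edge \<open>uv\<close>, \<open>2 d(u) d(v) = d(u)\<^sup>2 + d(v)\<^sup>2 - (d(u) - d(v))\<^sup>2\<close>. Summed over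
  all edges, the squares contribute \<open>\<Sum>\<^sub>u d(u)\<^sup>3\<close>, while the squared differences over the
  edges are at most those over all pairs of vertices, which by Lagrange's identity
  equal \<open>n \<Sum>\<^sub>u d(u)\<^sup>2 - (\<Sum>\<^sub>u d(u))\<^sup>2 = n \<Sum>\<^sub>u d(u)\<^sup>2 - 4m\<^sup>2\<close>.\<close>

lemma simple_graph_finite_edges:
  assumes "simple_graph V E"
  shows "finite E"
proof -
  have "E \<subseteq> Pow V" using assms by (auto simp: simple_graph_def)
  then show ?thesis using assms by (auto simp: simple_graph_def intro: finite_subset)
qed

lemma sum_edges_sum_vertices:
  fixes f :: "'a \<Rightarrow> 'b::comm_semiring_1"
  assumes "simple_graph V E"
  shows "(\<Sum>e\<in>E. \<Sum>u\<in>e. f u) = (\<Sum>u\<in>V. of_nat (degree E u) * f u)"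
proof -
  have fin: "finite V" "finite E"
    using assms simple_graph_finite_edges by (auto simp: simple_graph_def)
  have "(\<Sum>e\<in>E. \<Sum>u\<in>e. f u) = (\<Sum>e\<in>E. \<Sum>u\<in>{u\<in>V. u \<in> e}. f u)"
    using assms by (intro sum.cong refl) (auto simp: simple_graph_def)
  also have "\<dots> = (\<Sum>u\<in>V. \<Sum>e\<in>{e\<in>E. u \<in> e}. f u)"
    using fin(2,1) by (rule sum.swap_restrict)
  also have "\<dots> = (\<Sum>u\<in>V. of_nat (degree E u) * f u)"
    by (simp add: degree_def)
  finally show ?thesis .
qed

lemma sum_degree_eq_twice_card_edges:
  assumes "simple_graph V E"
  shows "(\<Sum>u\<in>V. degree E u) = 2 * card E"
proof -
  have "(\<Sum>u\<in>V. degree E u) = (\<Sum>e\<in>E. card e)"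
    using sum_edges_sum_vertices[OF assms, of "\<lambda>_. 1 :: nat"] by simp
  also have "\<dots> = 2 * card E"
    using assms by (simp add: simple_graph_def)
  finally show ?thesis .
qed

lemma card_2_prod_polarization:
  fixes x :: "'a \<Rightarrow> 'b::comm_ring_1"
  assumes "card e = 2"
  shows "4 * (\<Prod>u\<in>e. x u) = 2 * (\<Sum>u\<in>e. x u ^ 2) - (\<Sum>(a, b)\<in>e \<times> e. (x a - x b) ^ 2)"
proof -
  obtain a b where e: "e = {a, b}" "a \<noteq> b"
    using assms by (meson card_2_iff)
  then have "e \<times> e = {(a, a), (a, b), (b, a), (b, b)}" by auto
  then show ?thesis
    using e by (simp add: power2_eq_square algebra_simps)
qed

lemma card_2_eq_doubleton:
  assumes "card e = 2" "a \<in> e" "b \<in> e" "a \<noteq> b"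
  shows "e = {a, b}"
  using assms by (auto simp: card_2_iff)

text \<open>Distinct edges have disjoint sets of off-diagonal ordered pairs, so their sums
  fit together inside the sum over \<open>V \<times> V\<close>.\<close>

lemma sum_edges_pairs_le_sum_vertex_pairs:
  fixes f :: "'a \<times> 'a \<Rightarrow> 'b::ordered_comm_monoid_add"
  assumes G: "simple_graph V E"
    and nonneg: "\<And>p. 0 \<le> f p" and diagonal: "\<And>a. f (a, a) = 0"
  shows "(\<Sum>e\<in>E. \<Sum>p\<in>e \<times> e. f p) \<le> (\<Sum>p\<in>V \<times> V. f p)"
proof -
  define off_diag where "off_diag e = e \<times> e - Id" for e :: "'a set"
  have fin_V: "finite V" and fin_E: "finite E"
    using G simple_graph_finite_edges by (auto simp: simple_graph_def)
  have edge: "e \<subseteq> V" "card e = 2" if "e \<in> E" for e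
    using G that by (auto simp: simple_graph_def)
  have fin_edge: "finite e" if "e \<in> E" for e
    using edge[OF that] fin_V finite_subset by blast
  have "(\<Sum>p\<in>e \<times> e. f p) = (\<Sum>p\<in>off_diag e. f p)" if "e \<in> E" for e
    using fin_edge[OF that] diagonal
    by (intro sum.mono_neutral_right) (auto simp: off_diag_def)
  then have "(\<Sum>e\<in>E. \<Sum>p\<in>e \<times> e. f p) = (\<Sum>e\<in>E. \<Sum>p\<in>off_diag e. f p)"
    by simp
  also have "\<dots> = (\<Sum>p\<in>(\<Union>e\<in>E. off_diag e). f p)"
  proof (rule sum.UNION_disjoint[symmetric])
    show "finite E" by (fact fin_E)
    show "\<forall>e\<in>E. finite (off_diag e)"
      using fin_edge by (auto simp: off_diag_def)
    show "\<forall>e\<in>E. \<forall>e'\<in>E. e \<noteq> e' \<longrightarrow> off_diag e \<inter> off_diag e' = {}"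
      using edge card_2_eq_doubleton by (fastforce simp: off_diag_def)
  qed
  also have "\<dots> \<le> (\<Sum>p\<in>V \<times> V. f p)"
    using fin_V edge nonneg by (intro sum_mono2) (auto simp: off_diag_def)
  finally show ?thesis .
qed

lemma sum_square_diff_pairs:
  fixes x :: "'a \<Rightarrow> 'b::comm_ring_1"
  assumes "finite V"
  shows "(\<Sum>(a, b)\<in>V \<times> V. (x a - x b) ^ 2)
    = 2 * (of_nat (card V) * (\<Sum>u\<in>V. x u ^ 2) - (\<Sum>u\<in>V. x u) ^ 2)"
proof -
  have "(\<Sum>(a, b)\<in>V \<times> V. (x a - x b) ^ 2)
      = (\<Sum>a\<in>V. \<Sum>b\<in>V. x a ^ 2 + x b ^ 2 - 2 * x a * x b)"
    by (simp add: sum.cartesian_product power2_diff)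
  also have "\<dots> = 2 * (of_nat (card V) * (\<Sum>u\<in>V. x u ^ 2)) - 2 * (\<Sum>u\<in>V. x u) * (\<Sum>u\<in>V. x u)"
    by (simp add: sum.distrib sum_subtractf mult.assoc
        flip: sum_distrib_left sum_distrib_right)
  finally show ?thesis
    by (simp add: power2_eq_square algebra_simps)
qed

theorem proposition2:
  fixes V :: "'a set" and E :: "'a set set"
  assumes "simple_graph V E"
  shows "2 * (\<Sum>e\<in>E. \<Prod>u\<in>e. int (degree E u))
         \<ge> 4 * int (card E) ^ 2
           + (\<Sum>u\<in>V. int (degree E u) ^ 3 - int (card V) * int (degree E u) ^ 2)"
proof -
  define d where "d u = int (degree E u)" for u
  define D where "D = (\<Sum>e\<in>E. \<Sum>(a, b)\<in>e \<times> e. (d a - d b) ^ 2)"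
  have "4 * (\<Sum>e\<in>E. \<Prod>u\<in>e. d u) = 2 * (\<Sum>e\<in>E. \<Sum>u\<in>e. d u ^ 2) - D"
    using assms
    by (simp add: D_def sum_distrib_left sum_subtractf card_2_prod_polarization simple_graph_def)
  also have "(\<Sum>e\<in>E. \<Sum>u\<in>e. d u ^ 2) = (\<Sum>u\<in>V. d u ^ 3)"
    by (simp add: sum_edges_sum_vertices[OF assms] d_def power2_eq_square power3_eq_cube ac_simps)
  finally have products: "4 * (\<Sum>e\<in>E. \<Prod>u\<in>e. d u) = 2 * (\<Sum>u\<in>V. d u ^ 3) - D" .
  have "D \<le> (\<Sum>(a, b)\<in>V \<times> V. (d a - d b) ^ 2)"
    unfolding D_def by (rule sum_edges_pairs_le_sum_vertex_pairs[OF assms]) auto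
  also have "\<dots> = 2 * (int (card V) * (\<Sum>u\<in>V. d u ^ 2) - (\<Sum>u\<in>V. d u) ^ 2)"
    using assms by (simp add: sum_square_diff_pairs simple_graph_def)
  finally have deviations: "D \<le> 2 * (int (card V) * (\<Sum>u\<in>V. d u ^ 2) - (2 * int (card E)) ^ 2)"
    using sum_degree_eq_twice_card_edges[OF assms]
    by (simp add: d_def flip: of_nat_sum)
  have "(\<Sum>u\<in>V. d u ^ 3 - int (card V) * d u ^ 2)
      = (\<Sum>u\<in>V. d u ^ 3) - int (card V) * (\<Sum>u\<in>V. d u ^ 2)"
    by (simp add: sum_subtractf sum_distrib_left)
  then show ?thesis
    using products deviations by (simp add: d_def power_mult_distrib)
qed

end
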